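(* Realize $\mathrm{SO}(3)\times\mathbb{R}$ as the group of $4\times4$ matrices $(C,v)=\begin{pmatrix}C&0\\0&e^v\end{pmatrix}$, $C\in\mathrm{SO}(3)$, $v\in\mathbb{R}$, and let $E_1=e_{32}-e_{23}$, $E_2=e_{13}-e_{31}$, $E_3=e_{21}-e_{12}$, $E_4=e_{44}$ ($e_{jk}$ the $4\times4$ matrix units), $e_1=E_1$, $e_2=E_4$, $e_3=E_2$, $e_4=E_3$. For $\alpha_1^2+\alpha_2^2+\alpha_3^2=1$, $\beta\in\mathbb{R}$ let $$\gamma_2(t)=\gamma_2(\alpha_1,\alpha_2,\alpha_3,\beta;t)=\exp\bigl(t(\alpha_1e_1+\alpha_2e_2+\alpha_3e_3+\beta e_4)\bigr)\exp(-t\beta e_4)$$ (the arclength geodesics through $\mathrm{Id}$ of the left-invariant sub-Riemannian metric $\rho_2$ defined by $\mathrm{span}(e_1,e_2,e_3)$ with orthonormal basis $e_1,e_2,e_3$). Put $w_2=\sqrt{1-\alpha_2^2+\beta^2}$, $\mu_2=\frac{\sin w_2t}{w_2}$, $\nu_2=\frac{1-\cos w_2t}{w_2^2}$. If $\alpha_2\neq\pm1$, then $\gamma_2(t)=(C,v)(t)$ with $v(t)=\alpha_2t$ and the columns $C_1,C_2,C_3$ of $C(t)\in\mathrm{SO}(3)$ given by $$C_1=\begin{pmatrix}(1-\nu_2(\alpha_3^2+\beta^2))\cos\beta t-(\alpha_1\alpha_3\nu_2-\beta\mu_2)\sin\beta t\\ (\alpha_1\alpha_3\nu_2+\beta\mu_2)\cos\beta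 t-(1-\nu_2(\alpha_1^2+\beta^2))\sin\beta t\\ (\alpha_1\beta\nu_2-\alpha_3\mu_2)\cos\beta t-(\alpha_3\beta\nu_2+\alpha_1\mu_2)\sin\beta t\end{pmatrix},$$ $$C_2=\begin{pmatrix}(1-\nu_2(\alpha_3^2+\beta^2))\sin\beta t+(\alpha_1\alpha_3\nu_2-\beta\mu_2)\cos\beta t\\ (\alpha_1\alpha_3\nu_2+\beta\mu_2)\sin\beta t+(1-\nu_2(\alpha_1^2+\beta^2))\cos\beta t\\ (\alpha_1\beta\nu_2-\alpha_3\mu_2)\sin\beta t+(\alpha_3\beta\nu_2+\alpha_1\mu_2)\cos\beta t\end{pmatrix},\quad C_3=\begin{pmatrix}\alpha_1\beta\nu_2+\alpha_3\mu_2\\ \alpha_3\beta\nu_2-\alpha_1\mu_2\\ 1-\nu_2(\alpha_1^2+\alpha_3^2)\end{pmatrix}.$$ If $\alpha_2=\pm1$, then $\gamma_2(t)=(E,\alpha_2t)$, $t\in\mathbb{R}$, where $E$ is the $3\times3$ identity matrix.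
   Context: The matrices $E_1,\dots,E_4$ satisfy $[E_1,E_2]=E_3$, $[E_2,E_3]=E_1$, $[E_3,E_1]=E_2$, $[E_i,E_4]=0$. *)

theory Defs
  imports "HOL-Analysis.Analysis"
begin

text \<open>The index type 4 has the four elements 1,2,3 and 0 (numerals wrap mod 4);
  we identify them with the paper's row/column numbers 1,2,3,4 via idx.\<close>

definition idx :: "4 \<Rightarrow> nat" where
  "idx i = (if i = 1 then 1 else if i = 2 then 2 else if i = 3 then 3 else 4)"

definition munit :: "nat \<Rightarrow> nat \<Rightarrow> real^4^4" where
  "munit j k = (\<chi> a b. if idx a = j \<and> idx b = k then 1 else 0)"

fun mpow :: "real^4^4 \<Rightarrow> nat \<Rightarrow> real^4^4" where
  "mpow A 0 = mat 1"
| "mpow A (Suc n) = A ** mpow A n"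

definition mexp :: "real^4^4 \<Rightarrow> real^4^4" where
  "mexp A = (\<Sum>n. (1 / fact n) *\<^sub>R mpow A n)"

definition E1 :: "real^4^4" where "E1 = munit 3 2 - munit 2 3"
definition E2 :: "real^4^4" where "E2 = munit 1 3 - munit 3 1"
definition E3 :: "real^4^4" where "E3 = munit 2 1 - munit 1 2"
definition E4 :: "real^4^4" where "E4 = munit 4 4"

definition e1 :: "real^4^4" where "e1 = E1"
definition e2 :: "real^4^4" where "e2 = E4"
definition e3 :: "real^4^4" where "e3 = E2"
definition e4 :: "real^4^4" where "e4 = E3"

definition gamma2 :: "real \<Rightarrow> real \<Rightarrow> real \<Rightarrow> real \<Rightarrow> real \<Rightarrow> real^4^4" where
  "gamma2 a1 a2 a3 b t =
     mexp (t *\<^sub>R (a1 *\<^sub>R e1 + a2 *\<^sub>R e2 + a3 *\<^sub>R e3 + b *\<^sub>R e4)) ** mexp ((- t * b) *\<^sub>R e4)"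

definition blk :: "(nat \<Rightarrow> nat \<Rightarrow> real) \<Rightarrow> real \<Rightarrow> real^4^4" where
  "blk C v = (\<chi> a b. if idx a = 4 \<and> idx b = 4 then exp v
                      else if idx a = 4 \<or> idx b = 4 then 0
                      else C (idx a) (idx b))"

definition w2 :: "real \<Rightarrow> real \<Rightarrow> real" where
  "w2 a2 b = sqrt (1 - a2^2 + b^2)"
definition mu2 :: "real \<Rightarrow> real \<Rightarrow> real \<Rightarrow> real" where
  "mu2 a2 b t = sin (w2 a2 b * t) / w2 a2 b"
definition nu2 :: "real \<Rightarrow> real \<Rightarrow> real \<Rightarrow> real" where
  "nu2 a2 b t = (1 - cos (w2 a2 b * t)) / (w2 a2 b)^2"

text \<open>The matrix C(t): entry (i,k) is the i-th component of column C_k.\<close>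
definition Cmat :: "real \<Rightarrow> real \<Rightarrow> real \<Rightarrow> real \<Rightarrow> real \<Rightarrow> nat \<Rightarrow> nat \<Rightarrow> real" where
  "Cmat a1 a2 a3 b t i k =
    (let mu = mu2 a2 b t; nu = nu2 a2 b t; c = cos (b * t); s = sin (b * t) in
     if k = 1 then
       (if i = 1 then (1 - nu * (a3^2 + b^2)) * c - (a1 * a3 * nu - b * mu) * s
        else if i = 2 then (a1 * a3 * nu + b * mu) * c - (1 - nu * (a1^2 + b^2)) * s
        else (a1 * b * nu - a3 * mu) * c - (a3 * b * nu + a1 * mu) * s)
     else if k = 2 then
       (if i = 1 then (1 - nu * (a3^2 + b^2)) * s + (a1 * a3 * nu - b * mu) * c
        else if i = 2 then (a1 * a3 * nu + b * mu) * s + (1 - nu * (a1^2 + b^2)) * c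
        else (a1 * b * nu - a3 * mu) * s + (a3 * b * nu + a1 * mu) * c)
     else
       (if i = 1 then a1 * b * nu + a3 * mu
        else if i = 2 then a3 * b * nu - a1 * mu
        else 1 - nu * (a1^2 + a3^2)))"

definition Id3 :: "nat \<Rightarrow> nat \<Rightarrow> real" where
  "Id3 i k = (if i = k then 1 else 0)"

end

theory Submission
  imports Defs
begin

text \<open>The generator \<open>X = \<alpha>\<^sub>1 E\<^sub>1 + \<alpha>\<^sub>3 E\<^sub>2 + \<beta> E\<^sub>3\<close> of the first factor lies in \<open>so(3)\<close>,
  so \<open>X\<^sup>3 = -w\<^sub>2\<^sup>2 X\<close>, and it annihilates the idempotent \<open>E\<^sub>4\<close> from both sides.  Hence the
  exponential series of \<open>t X + t \<alpha>\<^sub>2 E\<^sub>4\<close> collapses to Rodrigues' formula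
  \<open>I + \<mu>\<^sub>2 X + \<nu>\<^sub>2 X\<^sup>2 + (e\<^bsup>\<alpha>\<^sub>2 t\<^esup> - 1) E\<^sub>4\<close>; multiplying by the rotation
  \<open>exp(-t \<beta> E\<^sub>3)\<close> and comparing entries gives \<open>C(t)\<close>.  For \<open>\<alpha>\<^sub>2 = \<plusminus>1\<close> we have
  \<open>\<alpha>\<^sub>1 = \<alpha>\<^sub>3 = 0\<close>, and the two rotations about the third axis cancel.\<close>

lemma matrix_add_rdistrib: "(B + C) ** A = B ** A + C ** A"
  by (vector matrix_matrix_mult_def sum.distrib[symmetric] field_simps)

lemma mpow_scaleR: "mpow (c *\<^sub>R A) n = c ^ n *\<^sub>R mpow A n"
  by (induction n) (simp_all add: matrix_scalar_ac scalar_matrix_assoc[symmetric])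

lemma mpow_idempotent:
  assumes "E ** E = E"
  shows "mpow E (Suc n) = E"
  by (induction n) (simp_all add: assms)

lemma mpow_cubic:
  assumes cube: "X ** (X ** X) = c *\<^sub>R X"
  shows "mpow X (2 * k + 1) = c ^ k *\<^sub>R X \<and> mpow X (2 * k + 2) = c ^ k *\<^sub>R (X ** X)"
proof (induction k)
  case 0
  then show ?case by (simp add: numeral_2_eq_2)
next
  case (Suc k)
  have "mpow X (2 * Suc k + 1) = X ** (X ** mpow X (2 * k + 1))"
    and "mpow X (2 * Suc k + 2) = X ** (X ** mpow X (2 * k + 2))"
    by (simp_all add: numeral_2_eq_2)
  with Suc show ?case
    by (simp add: matrix_scalar_ac scalar_matrix_assoc[symmetric] matrix_mul_assoc cube)
      (simp add: matrix_mul_assoc[symmetric] cube matrix_scalar_ac scalar_matrix_assoc[symmetric])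
qed

lemma mpow_orthogonal_add:
  assumes "P ** Q = 0" "Q ** P = 0"
  shows "mpow (P + Q) (Suc n) = mpow P (Suc n) + mpow Q (Suc n)"
proof (induction n)
  case 0
  then show ?case by simp
next
  case (Suc n)
  have "mpow (P + Q) (Suc (Suc n)) = (P + Q) ** (P ** mpow P n + Q ** mpow Q n)"
    using Suc by simp
  also have "\<dots> = P ** (P ** mpow P n) + (P ** Q) ** mpow Q n
                  + (Q ** P) ** mpow P n + Q ** (Q ** mpow Q n)"
    by (simp add: matrix_add_ldistrib matrix_add_rdistrib matrix_mul_assoc)
  finally show ?case by (simp add: assms)
qed

definition mexp_term :: "real^4^4 \<Rightarrow> nat \<Rightarrow> real^4^4" where
  "mexp_term A n = (1 / fact n) *\<^sub>R mpow A n"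

lemma mexp_eqI: "mexp_term A sums M \<Longrightarrow> mexp A = M"
  unfolding mexp_def mexp_term_def by (rule sums_unique[symmetric])

lemma mexp_term_orthogonal_add_sums:
  assumes "P ** Q = 0" "Q ** P = 0" "mexp_term P sums S" "mexp_term Q sums T"
  shows "mexp_term (P + Q) sums (S + T - mat 1)"
proof -
  have "mexp_term (P + Q) n = mexp_term P n + mexp_term Q n - (if n = 0 then mat 1 else 0)" for n
  proof (cases n)
    case (Suc m)
    then show ?thesis
      by (simp only: mexp_term_def mpow_orthogonal_add[OF assms(1,2)]) (simp add: scaleR_add_right)
  qed (simp add: mexp_term_def)
  then have "mexp_term (P + Q) = (\<lambda>n. mexp_term P n + mexp_term Q n - (if n = 0 then mat 1 else 0))"
    by blast
  then show ?thesis
    by (simp only:) (intro sums_diff sums_add assms(3,4) sums_single)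
qed

lemma mexp_term_idempotent_sums:
  assumes "E ** E = E"
  shows "mexp_term (c *\<^sub>R E) sums (mat 1 + (exp c - 1) *\<^sub>R E)"
proof -
  define f where "f n = c ^ n / fact n - (if n = 0 then 1 else 0)" for n
  have "mexp_term (c *\<^sub>R E) n = (if n = 0 then mat 1 else 0) + f n *\<^sub>R E" for n
  proof (cases n)
    case (Suc m)
    then show ?thesis
      by (simp only: mexp_term_def mpow_scaleR mpow_idempotent[OF assms]) (simp add: f_def)
  qed (simp add: mexp_term_def f_def)
  then have "mexp_term (c *\<^sub>R E) = (\<lambda>n. (if n = 0 then mat 1 else 0) + f n *\<^sub>R E)"
    by blast
  moreover have "f sums (exp c - 1)"
    using sums_diff[OF exp_converges[of c] sums_single[of 0 "\<lambda>_. 1"]]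
    by (simp add: f_def[abs_def] divide_inverse mult.commute)
  ultimately show ?thesis
    by (simp only:) (intro sums_add sums_single sums_scaleR_left)
qed

lemma mexp_term_rodrigues_sums:
  assumes cube: "X ** (X ** X) = (- w\<^sup>2) *\<^sub>R X" and "w \<noteq> 0"
  shows "mexp_term (t *\<^sub>R X) sums
           (mat 1 + (sin (w * t) / w) *\<^sub>R X + ((1 - cos (w * t)) / w\<^sup>2) *\<^sub>R (X ** X))"
proof -
  \<comment> \<open>Odd terms are multiples of \<open>X\<close>, even ones of \<open>X\<^sup>2\<close>, with coefficients taken from
    the sine and cosine series of \<open>w t\<close>.\<close>
  define f1 where "f1 n = sin_coeff n * (w * t) ^ n / w" for n
  define f2 where "f2 n = ((if n = 0 then 1 else 0) - cos_coeff n * (w * t) ^ n) / w\<^sup>2" for n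
  have neg_pow: "(- w\<^sup>2) ^ k = (-1) ^ k * w ^ (2 * k)" for k
    by (subst power_minus) (simp add: power_mult)
  have "mexp_term (t *\<^sub>R X) n = (if n = 0 then mat 1 else 0) + f1 n *\<^sub>R X + f2 n *\<^sub>R (X ** X)" for n
  proof -
    consider "n = 0" | k where "n = 2 * k + 1" | k where "n = 2 * k + 2"
    proof -
      have "n = 0 \<or> (\<exists>k. n = 2 * k + 1) \<or> (\<exists>k. n = 2 * k + 2)" by presburger
      then show ?thesis using that by blast
    qed
    then show ?thesis
    proof cases
      case 1
      then show ?thesis by (simp add: mexp_term_def f1_def f2_def)
    next
      case (2 k)
      have "mpow (t *\<^sub>R X) n = (t ^ n * (- w\<^sup>2) ^ k) *\<^sub>R X"
        using mpow_cubic[OF cube, of k] by (simp add: mpow_scaleR 2 del: mpow.simps)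
      moreover have "f1 n = t ^ n * (- w\<^sup>2) ^ k / fact n"
        using \<open>w \<noteq> 0\<close> by (simp add: f1_def sin_coeff_def 2 neg_pow power_mult_distrib)
      moreover have "f2 n = 0"
        by (simp add: f2_def cos_coeff_def 2)
      ultimately show ?thesis by (simp add: mexp_term_def 2)
    next
      case (3 k)
      have "mpow (t *\<^sub>R X) n = (t ^ n * (- w\<^sup>2) ^ k) *\<^sub>R (X ** X)"
        using mpow_cubic[OF cube, of k] by (simp add: mpow_scaleR 3 del: mpow.simps)
      moreover have "f2 n = t ^ n * (- w\<^sup>2) ^ k / fact n"
        unfolding neg_pow using \<open>w \<noteq> 0\<close>
        by (simp add: f2_def cos_coeff_def 3 power_mult_distrib power_add power2_eq_square)
      moreover have "f1 n = 0"
        by (simp add: f1_def sin_coeff_def 3)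
      ultimately show ?thesis by (simp add: mexp_term_def 3)
    qed
  qed
  then have "mexp_term (t *\<^sub>R X) = (\<lambda>n. (if n = 0 then mat 1 else 0) + f1 n *\<^sub>R X + f2 n *\<^sub>R (X ** X))"
    by blast
  moreover have "f1 sums (sin (w * t) / w)"
    using sums_divide[OF sin_converges[of "w * t"], of w] by (simp add: f1_def[abs_def])
  moreover have "f2 sums ((1 - cos (w * t)) / w\<^sup>2)"
    using sums_divide[OF sums_diff[OF sums_single[of 0 "\<lambda>_. 1"] cos_converges[of "w * t"]], of "w\<^sup>2"]
    by (simp only: f2_def[abs_def] scaleR_conv_of_real of_real_eq_id id_apply)
  ultimately show ?thesis
    by (simp only:) (intro sums_add sums_single sums_scaleR_left)
qed

lemma mexp_rodrigues_add_idempotent: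
  assumes "X ** (X ** X) = (- w\<^sup>2) *\<^sub>R X" "w \<noteq> 0"
    and "E ** E = E" "X ** E = 0" "E ** X = 0"
  shows "mexp (t *\<^sub>R X + c *\<^sub>R E)
    = mat 1 + (sin (w * t) / w) *\<^sub>R X + ((1 - cos (w * t)) / w\<^sup>2) *\<^sub>R (X ** X) + (exp c - 1) *\<^sub>R E"
proof (rule mexp_eqI)
  have "(t *\<^sub>R X) ** (c *\<^sub>R E) = 0" "(c *\<^sub>R E) ** (t *\<^sub>R X) = 0"
    by (simp_all add: matrix_scalar_ac scalar_matrix_assoc[symmetric] assms)
  from mexp_term_orthogonal_add_sums[OF this mexp_term_rodrigues_sums[OF assms(1,2)]
      mexp_term_idempotent_sums[OF assms(3)]]
  show "mexp_term (t *\<^sub>R X + c *\<^sub>R E) sums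
    (mat 1 + (sin (w * t) / w) *\<^sub>R X + ((1 - cos (w * t)) / w\<^sup>2) *\<^sub>R (X ** X) + (exp c - 1) *\<^sub>R E)"
    by (simp add: algebra_simps)
qed

text \<open>Rewriting with \<open>entrywise_simps\<close> turns identities between explicit 4x4 matrices into
  identities between their entries, indexed as in the paper.\<close>

definition matrix_of_entries :: "(nat \<Rightarrow> nat \<Rightarrow> real) \<Rightarrow> real^4^4" where
  "matrix_of_entries f = (\<chi> a b. f (idx a) (idx b))"

lemma idx_numeral [simp]: "idx 1 = 1" "idx 2 = 2" "idx 3 = 3" "idx 4 = 4"
  by (simp_all add: idx_def)

lemma idx_eq_iff: "idx a = idx b \<longleftrightarrow> a = b"
  using exhaust_4[of a] exhaust_4[of b] by auto

lemma matrix_of_entries_eq_iff: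
  "matrix_of_entries f = matrix_of_entries g \<longleftrightarrow> (\<forall>i\<in>{1,2,3,4}. \<forall>j\<in>{1,2,3,4}. f i j = g i j)"
  by (simp add: matrix_of_entries_def vec_eq_iff forall_4)

lemma matrix_of_entries_mult:
  "matrix_of_entries f ** matrix_of_entries g
     = matrix_of_entries (\<lambda>i j. f i 1 * g 1 j + f i 2 * g 2 j + f i 3 * g 3 j + f i 4 * g 4 j)"
  by (simp add: matrix_matrix_mult_def matrix_of_entries_def vec_eq_iff sum_4)

lemma matrix_of_entries_add:
  "matrix_of_entries f + matrix_of_entries g = matrix_of_entries (\<lambda>i j. f i j + g i j)"
  by (simp add: matrix_of_entries_def vec_eq_iff)

lemma matrix_of_entries_diff:
  "matrix_of_entries f - matrix_of_entries g = matrix_of_entries (\<lambda>i j. f i j - g i j)"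
  by (simp add: matrix_of_entries_def vec_eq_iff)

lemma matrix_of_entries_scaleR:
  "c *\<^sub>R matrix_of_entries f = matrix_of_entries (\<lambda>i j. c * f i j)"
  by (simp add: matrix_of_entries_def vec_eq_iff)

lemma mat_1_eq_matrix_of_entries: "mat 1 = matrix_of_entries (\<lambda>i j. if i = j then 1 else 0)"
  by (simp add: matrix_of_entries_def vec_eq_iff mat_def idx_eq_iff)

lemma zero_eq_matrix_of_entries: "0 = matrix_of_entries (\<lambda>i j. 0)"
  by (simp add: matrix_of_entries_def vec_eq_iff)

lemma munit_eq_matrix_of_entries:
  "munit j k = matrix_of_entries (\<lambda>a b. if a = j \<and> b = k then 1 else 0)"
  by (simp add: matrix_of_entries_def munit_def)

lemma blk_eq_matrix_of_entries:
  "blk C v = matrix_of_entries (\<lambda>a b. if a = 4 \<and> b = 4 then exp v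
                                     else if a = 4 \<or> b = 4 then 0 else C a b)"
  by (simp add: matrix_of_entries_def blk_def)

lemmas entrywise_simps = matrix_of_entries_eq_iff matrix_of_entries_mult matrix_of_entries_add
  matrix_of_entries_diff matrix_of_entries_scaleR mat_1_eq_matrix_of_entries
  zero_eq_matrix_of_entries munit_eq_matrix_of_entries blk_eq_matrix_of_entries
  E1_def E2_def E3_def E4_def

lemma so3_cube:
  fixes x y z :: real
  defines "X \<equiv> x *\<^sub>R E1 + y *\<^sub>R E2 + z *\<^sub>R E3"
  shows "X ** (X ** X) = (- (x\<^sup>2 + y\<^sup>2 + z\<^sup>2)) *\<^sub>R X"
  by (simp add: X_def entrywise_simps power2_eq_square algebra_simps)

lemma so3_E4_orthogonal:
  fixes x y z :: real
  defines "X \<equiv> x *\<^sub>R E1 + y *\<^sub>R E2 + z *\<^sub>R E3"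
  shows "X ** E4 = 0" "E4 ** X = 0"
  by (simp_all add: X_def entrywise_simps)

lemma E4_idempotent: "E4 ** E4 = E4"
  by (simp add: entrywise_simps)

lemma mexp_so3_add_E4:
  fixes x y z w :: real
  assumes "w\<^sup>2 = x\<^sup>2 + y\<^sup>2 + z\<^sup>2" "w \<noteq> 0"
  defines "X \<equiv> x *\<^sub>R E1 + y *\<^sub>R E2 + z *\<^sub>R E3"
  shows "mexp (t *\<^sub>R X + c *\<^sub>R E4)
    = mat 1 + (sin (w * t) / w) *\<^sub>R X + ((1 - cos (w * t)) / w\<^sup>2) *\<^sub>R (X ** X) + (exp c - 1) *\<^sub>R E4"
  using mexp_rodrigues_add_idempotent[OF _ \<open>w \<noteq> 0\<close> E4_idempotent] so3_cube so3_E4_orthogonal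
  unfolding X_def assms(1) by blast

lemma mexp_rotation_E3: "mexp (\<sigma> *\<^sub>R E3) = mat 1 + sin \<sigma> *\<^sub>R E3 + (1 - cos \<sigma>) *\<^sub>R (E3 ** E3)"
  using mexp_so3_add_E4[of 1 0 0 1 \<sigma> 0] by simp

lemma gamma2_factorization:
  "gamma2 a1 a2 a3 b t
     = mexp (t *\<^sub>R (a1 *\<^sub>R E1 + a3 *\<^sub>R E2 + b *\<^sub>R E3) + (t * a2) *\<^sub>R E4) ** mexp ((- (t * b)) *\<^sub>R E3)"
  by (simp add: gamma2_def e1_def e2_def e3_def e4_def algebra_simps)

lemma gamma2_generic:
  assumes sphere: "a1\<^sup>2 + a2\<^sup>2 + a3\<^sup>2 = 1" and "a2\<^sup>2 < 1"
  shows "gamma2 a1 a2 a3 b t = blk (Cmat a1 a2 a3 b t) (a2 * t)"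
proof -
  define w where "w = w2 a2 b"
  have "1 - a2\<^sup>2 + b\<^sup>2 = a1\<^sup>2 + a3\<^sup>2 + b\<^sup>2"
    using sphere by simp
  then have w_sq: "w\<^sup>2 = a1\<^sup>2 + a3\<^sup>2 + b\<^sup>2"
    by (simp add: w_def w2_def)
  have "0 < 1 - a2\<^sup>2 + b\<^sup>2"
    using \<open>a2\<^sup>2 < 1\<close> by (intro add_pos_nonneg) simp_all
  then have w_nonzero: "w \<noteq> 0"
    by (simp add: w_def w2_def)
  have exp_generator: "mexp (t *\<^sub>R (a1 *\<^sub>R E1 + a3 *\<^sub>R E2 + b *\<^sub>R E3) + (t * a2) *\<^sub>R E4)
    = mat 1 + mu2 a2 b t *\<^sub>R (a1 *\<^sub>R E1 + a3 *\<^sub>R E2 + b *\<^sub>R E3)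
      + nu2 a2 b t *\<^sub>R ((a1 *\<^sub>R E1 + a3 *\<^sub>R E2 + b *\<^sub>R E3) ** (a1 *\<^sub>R E1 + a3 *\<^sub>R E2 + b *\<^sub>R E3))
      + (exp (t * a2) - 1) *\<^sub>R E4"
    unfolding mu2_def nu2_def w_def[symmetric] using w_sq w_nonzero by (rule mexp_so3_add_E4)
  show ?thesis
    unfolding gamma2_factorization exp_generator mexp_rotation_E3
    by (simp add: entrywise_simps Cmat_def Let_def algebra_simps power2_eq_square)
qed

lemma gamma2_degenerate: "gamma2 0 a2 0 b t = blk Id3 (a2 * t)"
proof -
  have exp_generator: "mexp (t *\<^sub>R (0 *\<^sub>R E1 + 0 *\<^sub>R E2 + b *\<^sub>R E3) + (t * a2) *\<^sub>R E4)
    = mat 1 + sin (t * b) *\<^sub>R E3 + (1 - cos (t * b)) *\<^sub>R (E3 ** E3) + (exp (t * a2) - 1) *\<^sub>R E4"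
    using mexp_so3_add_E4[of 1 0 0 1 "t * b" "t * a2"] by (simp add: algebra_simps)
  show ?thesis
    unfolding gamma2_factorization exp_generator mexp_rotation_E3
    by (simp add: entrywise_simps Id3_def algebra_simps)
qed

theorem theorem7:
  fixes a1 a2 a3 b :: real
  assumes "a1^2 + a2^2 + a3^2 = 1"
  shows "(a2 \<noteq> 1 \<and> a2 \<noteq> -1 \<longrightarrow>
            (\<forall>t. gamma2 a1 a2 a3 b t = blk (Cmat a1 a2 a3 b t) (a2 * t)))
       \<and> (a2 = 1 \<or> a2 = -1 \<longrightarrow>
            (\<forall>t. gamma2 a1 a2 a3 b t = blk Id3 (a2 * t)))"
proof (intro conjI impI allI)
  fix t
  assume "a2 \<noteq> 1 \<and> a2 \<noteq> -1"
  then have "a2\<^sup>2 \<noteq> 1"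
    by (simp add: power2_eq_1_iff)
  moreover have "a2\<^sup>2 \<le> 1"
    using assms by (metis add_increasing2 le_add_same_cancel2 zero_le_power2)
  ultimately show "gamma2 a1 a2 a3 b t = blk (Cmat a1 a2 a3 b t) (a2 * t)"
    using gamma2_generic[OF assms] by simp
next
  fix t
  assume "a2 = 1 \<or> a2 = -1"
  then have "a1\<^sup>2 + a3\<^sup>2 = 0"
    using assms by auto
  then have "a1 = 0" "a3 = 0"
    by simp_all
  then show "gamma2 a1 a2 a3 b t = blk Id3 (a2 * t)"
    using gamma2_degenerate by simp
qed

end
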